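(* Let $(X,\tau)$ be a compact space and $(Y,\sigma)$ a kd-space. Then every continuous function $f\colon (X,\tau)\to(Y,\sigma)$ is perfect and super-closed. Consequently every continuous bijection $f\colon X\to Y$ is a homeomorphism, and every super-continuous bijection $f\colon X\to Y$ is a super-homeomorphism.
   Context: A space is a kd-space if every compact subset is $\delta$-closed, where: $U$ is regular open if $U=\mathrm{Int}(\mathrm{Cl}(U))$; $x$ is a $\delta$-cluster point of $B$ if $B\cap U\ne\emptyset$ for every regular open $U\ni x$; $B$ is $\delta$-closed if it contains all its $\delta$-cluster points; complements of $\delta$-closed sets are $\delta$-open. A continuous map is perfect if it is closed and has compact fibers. A function $f$ is super-closed if the image of every closed subset of $X$ is $\delta$-closed in $Y$, and super-continuous if the preimage of every open subset of $Y$ is $\delta$-open in $X$. A bijection is a super-homeomorphism if it is both super-closed and super-continuous. *)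

theory Defs
  imports "HOL-Analysis.Analysis"
begin

definition regular_openin :: "'a topology \<Rightarrow> 'a set \<Rightarrow> bool" where
  "regular_openin X U \<longleftrightarrow> U = X interior_of (X closure_of U)"

definition delta_cluster_point :: "'a topology \<Rightarrow> 'a set \<Rightarrow> 'a \<Rightarrow> bool" where
  "delta_cluster_point X B x \<longleftrightarrow> x \<in> topspace X \<and>
     (\<forall>U. regular_openin X U \<and> x \<in> U \<longrightarrow> B \<inter> U \<noteq> {})"

definition delta_closedin :: "'a topology \<Rightarrow> 'a set \<Rightarrow> bool" where
  "delta_closedin X B \<longleftrightarrow> B \<subseteq> topspace X \<and> (\<forall>x. delta_cluster_point X B x \<longrightarrow> x \<in> B)"

definition delta_openin :: "'a topology \<Rightarrow> 'a set \<Rightarrow> bool" where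
  "delta_openin X U \<longleftrightarrow> U \<subseteq> topspace X \<and> delta_closedin X (topspace X - U)"

definition kd_space :: "'a topology \<Rightarrow> bool" where
  "kd_space X \<longleftrightarrow> (\<forall>K. compactin X K \<longrightarrow> delta_closedin X K)"

text \<open>Perfect map as in the paper: continuous, closed, with compact fibres (no surjectivity).\<close>
definition perfect_map_kd :: "'a topology \<Rightarrow> 'b topology \<Rightarrow> ('a \<Rightarrow> 'b) \<Rightarrow> bool" where
  "perfect_map_kd X Y f \<longleftrightarrow> continuous_map X Y f \<and> closed_map X Y f \<and>
     (\<forall>y \<in> topspace Y. compactin X {x \<in> topspace X. f x = y})"

definition super_closed :: "'a topology \<Rightarrow> 'b topology \<Rightarrow> ('a \<Rightarrow> 'b) \<Rightarrow> bool" where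
  "super_closed X Y f \<longleftrightarrow> (\<forall>C. closedin X C \<longrightarrow> delta_closedin Y (f ` C))"

definition super_continuous :: "'a topology \<Rightarrow> 'b topology \<Rightarrow> ('a \<Rightarrow> 'b) \<Rightarrow> bool" where
  "super_continuous X Y f \<longleftrightarrow> f \<in> topspace X \<rightarrow> topspace Y \<and>
     (\<forall>U. openin Y U \<longrightarrow> delta_openin X {x \<in> topspace X. f x \<in> U})"

definition super_homeomorphism :: "'a topology \<Rightarrow> 'b topology \<Rightarrow> ('a \<Rightarrow> 'b) \<Rightarrow> bool" where
  "super_homeomorphism X Y f \<longleftrightarrow> bij_betw f (topspace X) (topspace Y) \<and>
     super_closed X Y f \<and> super_continuous X Y f"

end

theory Submission
  imports Defs
begin

(* Every delta-closed set is closed, so a kd-space is T1 and the image of a closed (hence compact)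
   subset of a compact space under a continuous map, being compact, is delta-closed. *)

lemma regular_openin_imp_openin: "regular_openin X U \<Longrightarrow> openin X U"
  unfolding regular_openin_def by (metis openin_interior_of)

lemma delta_closedin_imp_closedin:
  assumes "delta_closedin X B"
  shows "closedin X B"
proof -
  have "\<exists>U. openin X U \<and> x \<in> U \<and> U \<subseteq> topspace X - B" if x: "x \<in> topspace X - B" for x
  proof -
    have "\<not> delta_cluster_point X B x"
      using assms x by (auto simp: delta_closedin_def)
    then obtain U where U: "regular_openin X U" "x \<in> U" "B \<inter> U = {}"
      using x by (auto simp: delta_cluster_point_def)
    then have "openin X U"
      by (simp add: regular_openin_imp_openin)
    with U show ?thesis
      using openin_subset by blast
  qed
  then have "openin X (topspace X - B)"
    by (subst openin_subopen) blast
  moreover have "B \<subseteq> topspace X"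
    using assms by (simp add: delta_closedin_def)
  ultimately show ?thesis
    by (simp add: closedin_def)
qed

lemma delta_openin_imp_openin: "delta_openin X U \<Longrightarrow> openin X U"
  unfolding delta_openin_def
  by (metis delta_closedin_imp_closedin closedin_def double_diff order_refl)

lemma super_continuous_imp_continuous_map:
  "super_continuous X Y f \<Longrightarrow> continuous_map X Y f"
  unfolding continuous_map_def super_continuous_def using delta_openin_imp_openin by blast

lemma super_closed_imp_closed_map: "super_closed X Y f \<Longrightarrow> closed_map X Y f"
  unfolding closed_map_def super_closed_def using delta_closedin_imp_closedin by blast

lemma kd_space_imp_t1_space:
  assumes "kd_space X"
  shows "t1_space X"
  unfolding t1_space_closedin_singleton
proof
  fix x assume "x \<in> topspace X"
  then have "delta_closedin X {x}"
    using assms by (simp add: kd_space_def)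
  then show "closedin X {x}"
    by (rule delta_closedin_imp_closedin)
qed

lemma compactin_fibre_continuous_map:
  assumes "compact_space X" "t1_space Y" "continuous_map X Y f" "y \<in> topspace Y"
  shows "compactin X {x \<in> topspace X. f x = y}"
proof -
  have "closedin Y {y}"
    using assms(2,4) by (rule closedin_t1_singleton)
  then have "closedin X {x \<in> topspace X. f x \<in> {y}}"
    using assms(3) by (rule closedin_continuous_map_preimage[rotated])
  then show ?thesis
    using assms(1) closedin_compact_space by simp
qed

lemma super_closed_continuous_map_compact_kd:
  assumes "compact_space X" "kd_space Y" "continuous_map X Y f"
  shows "super_closed X Y f"
  using assms closedin_compact_space image_compactin
  unfolding super_closed_def kd_space_def by blast

lemma perfect_map_compact_kd:
  assumes "compact_space X" "kd_space Y" "continuous_map X Y f"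
  shows "perfect_map_kd X Y f"
  unfolding perfect_map_kd_def
  using assms super_closed_imp_closed_map[OF super_closed_continuous_map_compact_kd[OF assms]]
    compactin_fibre_continuous_map[OF assms(1) kd_space_imp_t1_space[OF assms(2)] assms(3)]
  by simp

theorem mainTheorem7:
  fixes X :: "'a topology" and Y :: "'b topology"
  assumes "compact_space X" and "kd_space Y"
  shows "(\<forall>f. continuous_map X Y f \<longrightarrow> perfect_map_kd X Y f \<and> super_closed X Y f)
       \<and> (\<forall>f. continuous_map X Y f \<and> bij_betw f (topspace X) (topspace Y)
              \<longrightarrow> homeomorphic_map X Y f)
       \<and> (\<forall>f. super_continuous X Y f \<and> bij_betw f (topspace X) (topspace Y)
              \<longrightarrow> super_homeomorphism X Y f)"
proof -
  have closed: "super_closed X Y f" if "continuous_map X Y f" for f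
    using assms that by (rule super_closed_continuous_map_compact_kd)
  have homeomorphic: "homeomorphic_map X Y f"
    if "continuous_map X Y f" "bij_betw f (topspace X) (topspace Y)" for f
    using that closed[OF that(1)] super_closed_imp_closed_map
    by (metis bijective_closed_imp_homeomorphic_map bij_betw_def)
  have super_homeomorphism: "super_homeomorphism X Y f"
    if "super_continuous X Y f" "bij_betw f (topspace X) (topspace Y)" for f
    using that closed[OF super_continuous_imp_continuous_map[OF that(1)]]
    by (simp add: super_homeomorphism_def)
  show ?thesis
    using perfect_map_compact_kd[OF assms] closed homeomorphic super_homeomorphism by simp
qed

end
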